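(* Let $y_1,y_2,y_3,y_4$ be the corners of the partially folded Miura parallelogram $y^\sigma_\omega(\Omega)$ (for some admissible $\omega\in[-\pi,\pi]$, $\sigma\in\{+,-\}$), and let $u_a=y_3-y_4$, $u_b=y_2-y_1$, $v_a=y_1-y_4$, $v_b=y_2-y_3$. Let $e\in\mathbb{S}^2$, $z\in\mathbb{R}^3$ with $z\cdot e=0$, $\theta_1,\theta_2\in(-\pi,\pi]$, $\tau_1,\tau_2\in\mathbb{R}$, let $R_\theta$ denote the right-hand rotation about $e$ by angle $\theta$, $P_e=I-e\otimes e$, and $g_i(x)=R_{\theta_i}(x-z)+\tau_i e+z$ ($i=1,2$). If $\theta_1\neq0$, then $$g_1(y_4)=y_1,\quad g_1(y_3)=y_2,\quad g_2(y_1)=y_2,\quad g_2(y_4)=y_3$$ holds if and only if $$\tau_1=v_a\cdot e,\ \ \tau_2=u_a\cdot e,\ \ (u_a-u_b)\cdot e=0,\ \ R_{\theta_1}P_eu_a=P_eu_b,\ \ R_{\theta_2}P_ev_a=P_ev_b,\ \ (I-R_{\theta_1})z=P_e(y_2-R_{\theta_1}y_3).$$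
   Context: Setting. $\{e_1,e_2,e_3\}$ is the standard basis of $\mathbb{R}^3$. Fix $\eta\in(0,\pi)$, $l>0$; set $x_1=0$, $x_2=e_1$, $x_4=l(\cos\eta\,e_1+\sin\eta\,e_2)$, $x_3=x_2+x_4$, and let $\Omega$ be the planar parallelogram with these corners. Fix $\lambda_1,\lambda_2\in(0,1)$ with $(\lambda_2-1)\lambda_2l^2=(\lambda_1-1)\lambda_1$ and let $x_0=\lambda_1x_2+\lambda_2x_4$ (the interior crease vertex). Let $t_i=(x_i-x_0)/|x_i-x_0|$, $n_i=-(t_i\cdot e_2)e_1+(t_i\cdot e_1)e_2$, $\alpha=\arccos(t_1\cdot t_2)$, $\beta=\arccos(t_2\cdot t_3)$, and $R_i(\gamma)=t_i\otimes t_i+\cos\gamma(n_i\otimes n_i+e_3\otimes e_3)+\sin\gamma(e_3\otimes n_i-n_i\otimes e_3)$. Let $\mathcal{A}=\emptyset$ if $\alpha=\beta=\pi/2$, $\{-\}$ if $\alpha=\beta\ne\pi/2$, $\{+\}$ if $\alpha=\pi-\beta\neq\pi/2$, $\{+,-\}$ otherwise. For $\sigma\in\{+,-\}$ (identified with $\pm1$) and $\omega\in[-\pi,\pi]$ the folding angles are: if $\sigma\in\mathcal{A}$, $\gamma_1=-\sigma\bar\gamma_3^\sigma(\omega)$, $\gamma_2=\sigma\omega$, $\gamma_3=\bar\gamma_3^\sigma(\omega)$, $\gamma_4=\omega$ with $\bar\gamma_3^{\sigma}(\omega)=\mathrm{sign}((\cos\alpha-\sigma\cos\beta)\omega)\arccos\big(\frac{(\sigma1-\cos\alpha\cos\beta)\cos\omega+\sin\alpha\sin\beta}{(\sigma1-\cos\alpha\cos\beta)+\sin\alpha\sin\beta\cos\omega}\big)$;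 if $\sigma\notin\mathcal{A}$ (possible only for $\sigma=+,\alpha=\beta$ or $\sigma=-,\alpha=\pi-\beta$), $\gamma_1=\gamma_3=0,\gamma_2=\gamma_4=\omega$ when $\sigma=+$ and $\gamma_1=\gamma_3=\omega,\gamma_2=\gamma_4=0$ when $\sigma=-$. The folded parallelogram $y^\sigma_\omega(\Omega)$ is the piecewise-rigid image of $\Omega$ that is the identity on the triangle $\mathrm{conv}\{x_1,x_0,x_2\}$, equals $x\mapsto R_2(\gamma_2)(x-x_0)+x_0$ on $\mathrm{conv}\{x_2,x_0,x_3\}$, $x\mapsto R_2(\gamma_2)R_3(\gamma_3)(x-x_0)+x_0$ on $\mathrm{conv}\{x_3,x_0,x_4\}$ and $x\mapsto R_1(-\gamma_1)(x-x_0)+x_0$ on $\mathrm{conv}\{x_4,x_0,x_1\}$. Its corners are $y_1=x_1$, $y_2=x_2$, $y_3=x_0+R_2(\gamma_2)(x_3-x_0)$, $y_4=x_0+R_2(\gamma_2)R_3(\gamma_3)(x_4-x_0)$. *)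

theory Defs
  imports "HOL-Analysis.Analysis"
begin

definition E1 :: "real^3" where "E1 = axis 1 1"
definition E2 :: "real^3" where "E2 = axis 2 1"
definition E3 :: "real^3" where "E3 = axis 3 1"

definition tens :: "real^3 \<Rightarrow> real^3 \<Rightarrow> real^3^3" where
  "tens a b = (\<chi> i j. a $ i * b $ j)"

definition xcorner :: "real \<Rightarrow> real \<Rightarrow> nat \<Rightarrow> real^3" where
  "xcorner \<eta> l i =
     (if i = 1 then 0
      else if i = 2 then E1
      else if i = 4 then l *\<^sub>R (cos \<eta> *\<^sub>R E1 + sin \<eta> *\<^sub>R E2)
      else E1 + l *\<^sub>R (cos \<eta> *\<^sub>R E1 + sin \<eta> *\<^sub>R E2))"

definition xzero :: "real \<Rightarrow> real \<Rightarrow> real \<Rightarrow> real \<Rightarrow> real^3" where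
  "xzero \<eta> l lam1 lam2 = lam1 *\<^sub>R xcorner \<eta> l 2 + lam2 *\<^sub>R xcorner \<eta> l 4"

definition tvec :: "real \<Rightarrow> real \<Rightarrow> real \<Rightarrow> real \<Rightarrow> nat \<Rightarrow> real^3" where
  "tvec \<eta> l lam1 lam2 i =
     (1 / norm (xcorner \<eta> l i - xzero \<eta> l lam1 lam2)) *\<^sub>R (xcorner \<eta> l i - xzero \<eta> l lam1 lam2)"

definition nvec :: "real^3 \<Rightarrow> real^3" where
  "nvec t = (- (t \<bullet> E2)) *\<^sub>R E1 + (t \<bullet> E1) *\<^sub>R E2"

definition alpha :: "real \<Rightarrow> real \<Rightarrow> real \<Rightarrow> real \<Rightarrow> real" where
  "alpha \<eta> l lam1 lam2 = arccos (tvec \<eta> l lam1 lam2 1 \<bullet> tvec \<eta> l lam1 lam2 2)"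

definition beta :: "real \<Rightarrow> real \<Rightarrow> real \<Rightarrow> real \<Rightarrow> real" where
  "beta \<eta> l lam1 lam2 = arccos (tvec \<eta> l lam1 lam2 2 \<bullet> tvec \<eta> l lam1 lam2 3)"

definition Rfold :: "real^3 \<Rightarrow> real \<Rightarrow> real^3^3" where
  "Rfold t \<gamma> = tens t t + cos \<gamma> *\<^sub>R (tens (nvec t) (nvec t) + tens E3 E3)
                + sin \<gamma> *\<^sub>R (tens E3 (nvec t) - tens (nvec t) E3)"

definition Ri :: "real \<Rightarrow> real \<Rightarrow> real \<Rightarrow> real \<Rightarrow> nat \<Rightarrow> real \<Rightarrow> real^3^3" where
  "Ri \<eta> l lam1 lam2 i \<gamma> = Rfold (tvec \<eta> l lam1 lam2 i) \<gamma>"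

text \<open>Signs sigma in {+,-} are encoded as the reals 1 and -1.
  inA a b s  expresses  s \<in> \<A>  for alpha = a, beta = b.\<close>
definition inA :: "real \<Rightarrow> real \<Rightarrow> real \<Rightarrow> bool" where
  "inA a b s =
     (if a = pi/2 \<and> b = pi/2 then False
      else if a = b then s = -1
      else if a = pi - b then s = 1
      else s = 1 \<or> s = -1)"

definition gamma3bar :: "real \<Rightarrow> real \<Rightarrow> real \<Rightarrow> real \<Rightarrow> real" where
  "gamma3bar a b s \<omega> =
     sgn ((cos a - s * cos b) * \<omega>) *
     arccos (((s - cos a * cos b) * cos \<omega> + sin a * sin b) /
             ((s - cos a * cos b) + sin a * sin b * cos \<omega>))"

definition foldangle :: "real \<Rightarrow> real \<Rightarrow> real \<Rightarrow> real \<Rightarrow> real \<Rightarrow> real \<Rightarrow> nat \<Rightarrow> real" where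
  "foldangle \<eta> l lam1 lam2 s \<omega> i =
     (let a = alpha \<eta> l lam1 lam2; b = beta \<eta> l lam1 lam2 in
      if inA a b s then
        (if i = 1 then - s * gamma3bar a b s \<omega>
         else if i = 2 then s * \<omega>
         else if i = 3 then gamma3bar a b s \<omega>
         else \<omega>)
      else if s = 1 then
        (if i = 1 \<or> i = 3 then 0 else \<omega>)
      else
        (if i = 1 \<or> i = 3 then \<omega> else 0))"

definition ycorner :: "real \<Rightarrow> real \<Rightarrow> real \<Rightarrow> real \<Rightarrow> real \<Rightarrow> real \<Rightarrow> nat \<Rightarrow> real^3" where
  "ycorner \<eta> l lam1 lam2 s \<omega> i =
     (let x0 = xzero \<eta> l lam1 lam2;
          R2 = Ri \<eta> l lam1 lam2 2 (foldangle \<eta> l lam1 lam2 s \<omega> 2);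
          R3 = Ri \<eta> l lam1 lam2 3 (foldangle \<eta> l lam1 lam2 s \<omega> 3) in
      if i = 1 then xcorner \<eta> l 1
      else if i = 2 then xcorner \<eta> l 2
      else if i = 3 then x0 + R2 *v (xcorner \<eta> l 3 - x0)
      else x0 + (R2 ** R3) *v (xcorner \<eta> l 4 - x0))"

text \<open>Right-hand rotation about the unit vector e by angle theta (Rodrigues' formula).\<close>
definition rotax :: "real^3 \<Rightarrow> real \<Rightarrow> real^3 \<Rightarrow> real^3" where
  "rotax e \<theta> x = cos \<theta> *\<^sub>R x + sin \<theta> *\<^sub>R cross3 e x + ((1 - cos \<theta>) * (e \<bullet> x)) *\<^sub>R e"

definition Pe :: "real^3 \<Rightarrow> real^3 \<Rightarrow> real^3" where
  "Pe e x = x - (e \<bullet> x) *\<^sub>R e"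

definition gmap :: "real^3 \<Rightarrow> real^3 \<Rightarrow> real \<Rightarrow> real \<Rightarrow> real^3 \<Rightarrow> real^3" where
  "gmap e z \<theta> \<tau> x = rotax e \<theta> (x - z) + \<tau> *\<^sub>R e + z"

end

theory Submission
  imports Defs
begin

text \<open>Split every point into its component along the axis e and its projection onto the plane
  orthogonal to e. The axial parts of the four helical conditions are four linear equations
  in \<open>\<tau>1, \<tau>2\<close>, equivalent to the three scalar conditions. In the plane, with
  \<open>q\<^sub>i = P\<^sub>e y\<^sub>i - z\<close>, the four rotation conditions imply the two edge conditions and
  \<open>R\<^sub>1 q\<^sub>3 = q\<^sub>2\<close>; conversely these give everything but \<open>R\<^sub>2 q\<^sub>4 = q\<^sub>3\<close>, whose defect is a
  planar vector fixed by \<open>R\<^sub>1\<close> (rotations about e commute), hence zero because \<open>\<theta>1 \<noteq> 0\<close>.\<close>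

lemma rotax_add: "rotax e t (x + y) = rotax e t x + rotax e t y"
  unfolding rotax_def by (simp add: cross_add_right algebra_simps)

lemma rotax_scaleR: "rotax e t (c *\<^sub>R x) = c *\<^sub>R rotax e t x"
  unfolding rotax_def by (simp add: cross_mult_right algebra_simps)

lemma linear_rotax: "linear (rotax e t)"
  by (rule linearI) (simp_all add: rotax_add rotax_scaleR)

lemmas rotax_diff = linear_diff[OF linear_rotax]

lemma rotax_axis: "norm e = 1 \<Longrightarrow> rotax e t e = e"
  unfolding rotax_def by (simp add: dot_square_norm algebra_simps)

lemma inner_axis_rotax: "norm e = 1 \<Longrightarrow> e \<bullet> rotax e t x = e \<bullet> x"
  unfolding rotax_def by (simp add: dot_cross_self dot_square_norm algebra_simps)

lemma cross3_rotax: "cross3 e (rotax e t x) = rotax e t (cross3 e x)"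
  unfolding rotax_def by (simp add: cross_add_right cross_mult_right dot_cross_self)

lemma rotax_commute:
  assumes "norm e = 1"
  shows "rotax e a (rotax e b x) = rotax e b (rotax e a x)"
proof -
  have "rotax e a (rotax e b x)
      = cos b *\<^sub>R rotax e a x + sin b *\<^sub>R rotax e a (cross3 e x) + ((1 - cos b) * (e \<bullet> x)) *\<^sub>R rotax e a e"
    by (simp add: rotax_def[of e b] rotax_add rotax_scaleR)
  also have "\<dots> = rotax e b (rotax e a x)"
    using assms by (simp add: rotax_def[of e b] cross3_rotax rotax_axis inner_axis_rotax)
  finally show ?thesis .
qed

lemma rotax_fixed_point_eq_0:
  assumes "e \<bullet> w = 0" "rotax e t w = w" "cos t \<noteq> 1"
  shows "w = 0"
proof -
  have "cos t *\<^sub>R w + sin t *\<^sub>R cross3 e w = w"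
    using assms(1,2) unfolding rotax_def by simp
  then have "w \<bullet> (cos t *\<^sub>R w + sin t *\<^sub>R cross3 e w) = w \<bullet> w"
    by simp
  then have "cos t * (w \<bullet> w) = w \<bullet> w"
    by (simp add: inner_add_right dot_cross_self)
  then show ?thesis
    using assms(3) by simp
qed

lemma cos_eq_1_imp_zero:
  fixes t :: real
  assumes "t \<in> {-pi<..pi}" "cos t = 1"
  shows "t = 0"
  using cos_inj_pi[of "\<bar>t\<bar>" 0] assms by auto

lemma Pe_diff: "Pe e (x - y) = Pe e x - Pe e y"
  unfolding Pe_def by (simp add: algebra_simps)

lemma Pe_rotax: "norm e = 1 \<Longrightarrow> Pe e (rotax e t x) = rotax e t (Pe e x)"
  unfolding Pe_def by (simp add: rotax_diff rotax_scaleR rotax_axis inner_axis_rotax)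

lemma inner_axis_Pe: "norm e = 1 \<Longrightarrow> e \<bullet> Pe e x = 0"
  unfolding Pe_def by (simp add: inner_diff_right dot_square_norm)

lemma eq_iff_axial_and_Pe_eq: "u = v \<longleftrightarrow> e \<bullet> u = e \<bullet> v \<and> Pe e u = Pe e v"
  unfolding Pe_def by (metis diff_add_cancel)

lemma gmap_eq_iff:
  assumes "norm e = 1" "z \<bullet> e = 0"
  shows "gmap e z t \<tau> x = y \<longleftrightarrow> e \<bullet> x + \<tau> = e \<bullet> y \<and> rotax e t (Pe e x - z) + z = Pe e y"
proof -
  have "e \<bullet> gmap e z t \<tau> x = e \<bullet> x + \<tau>"
    using assms by (simp add: gmap_def inner_add_right inner_diff_right inner_axis_rotax
        inner_commute dot_square_norm)
  moreover have "Pe e (gmap e z t \<tau> x) = rotax e t (Pe e x - z) + z"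
    using assms by (simp add: gmap_def Pe_def inner_axis_rotax rotax_add rotax_diff rotax_scaleR rotax_axis inner_commute dot_square_norm algebra_simps)
  ultimately show ?thesis
    using eq_iff_axial_and_Pe_eq[of "gmap e z t \<tau> x" y e] by auto
qed

lemma rotax_pair_iff:
  assumes e: "norm e = 1" and cos1: "cos t1 \<noteq> 1" and plane: "e \<bullet> q3 = e \<bullet> q4"
  shows "(rotax e t1 q4 = q1 \<and> rotax e t1 q3 = q2 \<and> rotax e t2 q1 = q2 \<and> rotax e t2 q4 = q3)
     \<longleftrightarrow> (rotax e t1 (q3 - q4) = q2 - q1 \<and> rotax e t2 (q1 - q4) = q2 - q3 \<and> rotax e t1 q3 = q2)"
proof (intro iffI)
  assume "rotax e t1 (q3 - q4) = q2 - q1 \<and> rotax e t2 (q1 - q4) = q2 - q3 \<and> rotax e t1 q3 = q2"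
  then have h1: "rotax e t1 q3 - rotax e t1 q4 = q2 - q1"
    and h2: "rotax e t2 q1 - rotax e t2 q4 = q2 - q3" and h3: "rotax e t1 q3 = q2"
    by (auto simp: rotax_diff)
  have r14: "rotax e t1 q4 = q1"
    using h1 h3 by simp
  define w where "w = rotax e t2 q4 - q3"
  have "rotax e t1 w = rotax e t2 (rotax e t1 q4) - rotax e t1 q3"
    unfolding w_def rotax_diff rotax_commute[OF e, of t1 t2] ..
  also have "\<dots> = w"
    using h2 unfolding r14 h3 w_def by (simp add: algebra_simps)
  finally have "rotax e t1 w = w" .
  moreover have "e \<bullet> w = 0"
    using e plane by (simp add: w_def inner_diff_right inner_axis_rotax)
  ultimately have "w = 0"
    using cos1 rotax_fixed_point_eq_0 by blast
  then have r24: "rotax e t2 q4 = q3"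
    by (simp add: w_def)
  then have "rotax e t2 q1 = q2"
    using h2 by (simp add: algebra_simps)
  with h3 r14 r24 show "rotax e t1 q4 = q1 \<and> rotax e t1 q3 = q2 \<and> rotax e t2 q1 = q2 \<and> rotax e t2 q4 = q3"
    by blast
qed (auto simp: rotax_diff)

lemma helical_pair_iff:
  fixes y1 y2 y3 y4 e z :: "real^3"
  assumes e: "norm e = 1" and ze: "z \<bullet> e = 0" and cos1: "cos t1 \<noteq> 1"
  shows "(gmap e z t1 \<tau>1 y4 = y1 \<and> gmap e z t1 \<tau>1 y3 = y2 \<and>
          gmap e z t2 \<tau>2 y1 = y2 \<and> gmap e z t2 \<tau>2 y4 = y3)
     \<longleftrightarrow> (\<tau>1 = (y1 - y4) \<bullet> e \<and> \<tau>2 = (y3 - y4) \<bullet> e \<and> ((y3 - y4) - (y2 - y1)) \<bullet> e = 0 \<and>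
          rotax e t1 (Pe e (y3 - y4)) = Pe e (y2 - y1) \<and>
          rotax e t2 (Pe e (y1 - y4)) = Pe e (y2 - y3) \<and>
          z - rotax e t1 z = Pe e (y2 - rotax e t1 y3))"
proof -
  define q where "q y = Pe e y - z" for y
  have gmap_iff: "gmap e z t \<tau> x = y \<longleftrightarrow> e \<bullet> x + \<tau> = e \<bullet> y \<and> rotax e t (q x) = q y"
    for t \<tau> x y
    unfolding gmap_eq_iff[OF e ze] q_def by (auto simp: algebra_simps)
  have Pe_diff_q: "Pe e (a - b) = q a - q b" for a b
    by (simp add: q_def Pe_diff)
  have center_iff: "z - rotax e t1 z = Pe e (y2 - rotax e t1 y3) \<longleftrightarrow> rotax e t1 (q y3) = q y2"
    using e by (auto simp: q_def Pe_diff Pe_rotax rotax_diff algebra_simps)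
  have axial: "(e \<bullet> y4 + \<tau>1 = e \<bullet> y1 \<and> e \<bullet> y3 + \<tau>1 = e \<bullet> y2 \<and>
        e \<bullet> y1 + \<tau>2 = e \<bullet> y2 \<and> e \<bullet> y4 + \<tau>2 = e \<bullet> y3)
     \<longleftrightarrow> (\<tau>1 = (y1 - y4) \<bullet> e \<and> \<tau>2 = (y3 - y4) \<bullet> e \<and> ((y3 - y4) - (y2 - y1)) \<bullet> e = 0)"
    by (simp add: inner_commute[of _ e] inner_diff_right) linarith
  have "e \<bullet> q y3 = e \<bullet> q y4"
    using e ze by (simp add: q_def inner_diff_right inner_axis_Pe inner_commute)
  note planar = rotax_pair_iff[OF e cos1 this, of "q y1" "q y2" t2]
  show ?thesis
    unfolding center_iff unfolding gmap_iff Pe_diff_q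
    using axial planar by blast
qed

theorem mainTheorem3:
  fixes \<eta> l lam1 lam2 \<sigma> \<omega> \<theta>1 \<theta>2 \<tau>1 \<tau>2 :: real
    and e z :: "real^3"
  assumes "0 < \<eta>" "\<eta> < pi" "0 < l"
    and "0 < lam1" "lam1 < 1" "0 < lam2" "lam2 < 1"
    and "(lam2 - 1) * lam2 * l^2 = (lam1 - 1) * lam1"
    and "\<sigma> \<in> {1, -1}" "\<omega> \<in> {-pi..pi}"
    and "norm e = 1" "z \<bullet> e = 0"
    and "\<theta>1 \<in> {-pi<..pi}" "\<theta>2 \<in> {-pi<..pi}"
    and "\<theta>1 \<noteq> 0"
  shows
    "(let y = ycorner \<eta> l lam1 lam2 \<sigma> \<omega>;
          ua = y 3 - y 4; ub = y 2 - y 1; va = y 1 - y 4; vb = y 2 - y 3 in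
      (gmap e z \<theta>1 \<tau>1 (y 4) = y 1 \<and> gmap e z \<theta>1 \<tau>1 (y 3) = y 2 \<and>
       gmap e z \<theta>2 \<tau>2 (y 1) = y 2 \<and> gmap e z \<theta>2 \<tau>2 (y 4) = y 3)
      \<longleftrightarrow>
      (\<tau>1 = va \<bullet> e \<and> \<tau>2 = ua \<bullet> e \<and> (ua - ub) \<bullet> e = 0 \<and>
       rotax e \<theta>1 (Pe e ua) = Pe e ub \<and>
       rotax e \<theta>2 (Pe e va) = Pe e vb \<and>
       z - rotax e \<theta>1 z = Pe e (y 2 - rotax e \<theta>1 (y 3))))"
proof -
  have "cos \<theta>1 \<noteq> 1"
    using cos_eq_1_imp_zero assms(13,15) by blast
  from helical_pair_iff[OF assms(11,12) this] show ?thesis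
    unfolding Let_def by blast
qed

end
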